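(* Let $N,k\ge 10$, let $L\subseteq Nk\mathbb{Z}^d$, and let $\gamma\in\mathbb{Z}^d$ with $0\le\gamma_i<k$ for all $i\le d$. Set $A=\bigcup_{\beta\in L}\big(\beta+[0,Nk)^d\big)$ and $B=\bigcup_{\beta\in L}\big(\beta+\gamma+[-3k,(N+3)k)^d\big)$ (intervals of integers). Then $B\setminus A$ can be tiled by almost $k$-boxes.
   Context: A box in $\mathbb{Z}^d$ is a product of integer intervals. An almost $k$-box is a box all of whose side lengths lie between $k$ and $2k$ and at most one of whose side lengths differs from $k$. A set is tiled by a family of boxes if it is partitioned into translates of boxes from that family. *)

theory Defs
  imports "HOL-Analysis.Analysis"
begin

text \<open>Points of Z^d are represented as int ^ 'd for a finite index type 'd.
  The box with lower corner a and side-length vector s is the product of the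
  integer intervals [a_i, a_i + s_i).\<close>

definition box_at :: "int ^ 'd \<Rightarrow> int ^ 'd \<Rightarrow> (int ^ 'd) set" where
  "box_at a s = {x. \<forall>i. a $ i \<le> x $ i \<and> x $ i < a $ i + s $ i}"

definition almost_k_shape :: "int \<Rightarrow> int ^ 'd \<Rightarrow> bool" where
  "almost_k_shape k s \<longleftrightarrow> (\<forall>i. k \<le> s $ i \<and> s $ i \<le> 2 * k) \<and> card {i. s $ i \<noteq> k} \<le> 1"

definition almost_k_box :: "int \<Rightarrow> (int ^ 'd) set \<Rightarrow> bool" where
  "almost_k_box k P \<longleftrightarrow> (\<exists>a s. almost_k_shape k s \<and> P = box_at a s)"

definition tiled_by_almost_k_boxes :: "int \<Rightarrow> (int ^ 'd) set \<Rightarrow> bool" where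
  "tiled_by_almost_k_boxes k S \<longleftrightarrow>
     (\<exists>T. (\<forall>P\<in>T. almost_k_box k P) \<and> pairwise disjnt T \<and> \<Union>T = S)"

end

theory Submission
  imports Defs
begin

text \<open>
  Number the coordinates injectively by f and let layer t be the union over \<beta> \<in> L of the boxes
  whose j-th side is the A-interval [\<beta>_j, \<beta>_j + Nk) if f j < t and the B-interval
  [\<beta>_j + \<gamma>_j - 3k, \<beta>_j + \<gamma>_j + (N + 3)k) otherwise. The layers decrease from B to A, so B - A
  is the disjoint union of the differences of consecutive layers, and it suffices to tile each
  difference layer u - layer (u + 1). For this we partition \<int>^d into products of integer
  intervals: along a coordinate with f j < u into the grid k\<int>, along one with f j > u into the
  grid \<gamma>_j + k\<int>, and along the coordinate with f j = u into an Nk-periodic pattern of intervals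
  of lengths between k and 2k. In each direction every endpoint of the intervals defining the
  two layers is a cut point of the partition, so every product cell lies inside or outside
  each layer; and the cells are almost k-boxes because only one direction has cells of length
  other than k.
\<close>

section \<open>Partitions of the integers into intervals\<close>

text \<open>A cell (a, l) is the interval [a, a + l); a cell map assigns to each integer its cell.\<close>

type_synonym cell_map = "int \<Rightarrow> int \<times> int"

definition ival :: "int \<times> int \<Rightarrow> int set" where
  "ival c = {fst c..<fst c + snd c}"

definition interval_partition_on :: "int set \<Rightarrow> cell_map \<Rightarrow> bool" where
  "interval_partition_on S c \<longleftrightarrow>
     (\<forall>y\<in>S. y \<in> ival (c y) \<and> ival (c y) \<subseteq> S \<and> (\<forall>z\<in>ival (c y). c z = c y))"

definition cut_on :: "int set \<Rightarrow> cell_map \<Rightarrow> int \<Rightarrow> bool" where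
  "cut_on S c b \<longleftrightarrow> (\<forall>y\<in>S. b \<le> fst (c y) \<or> fst (c y) + snd (c y) \<le> b)"

lemma interval_partition_onD:
  assumes "interval_partition_on S c" "y \<in> S"
  shows "y \<in> ival (c y)" "ival (c y) \<subseteq> S" "z \<in> ival (c y) \<Longrightarrow> c z = c y"
  using assms unfolding interval_partition_on_def by blast+

lemma ival_subset_iff:
  assumes "y \<in> ival c"
  shows "ival c \<subseteq> {a..<b} \<longleftrightarrow> a \<le> fst c \<and> fst c + snd c \<le> b"
  using assms by (auto simp: ival_def)

lemma interval_partition_on_bounds:
  assumes "interval_partition_on {a..<b} c" "y \<in> {a..<b}"
  shows "a \<le> fst (c y)" "fst (c y) + snd (c y) \<le> b"
  using interval_partition_onD[OF assms] ival_subset_iff by blast+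

lemma cut_on_lower:
  assumes "interval_partition_on {a..<b} c"
  shows "cut_on {a..<b} c a"
  using interval_partition_on_bounds[OF assms] by (simp add: cut_on_def)

lemma interval_partition_on_restrict:
  assumes c: "interval_partition_on UNIV c" and "cut_on UNIV c a" "cut_on UNIV c b"
  shows "interval_partition_on {a..<b} c"
  unfolding interval_partition_on_def
proof
  fix y assume y: "y \<in> {a..<b}"
  note cy = interval_partition_onD[OF c UNIV_I, where y = y]
  have "ival (c y) \<subseteq> {a..<b}"
    using cy(1) y assms(2,3)[unfolded cut_on_def, rule_format, of y] by (auto simp: ival_def)
  then show "y \<in> ival (c y) \<and> ival (c y) \<subseteq> {a..<b} \<and> (\<forall>z\<in>ival (c y). c z = c y)"
    using cy by blast
qed

lemma cut_on_mem_iff: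
  assumes "interval_partition_on UNIV c" "cut_on UNIV c a" "cut_on UNIV c b" "z \<in> ival (c y)"
  shows "a \<le> z \<and> z < b \<longleftrightarrow> a \<le> y \<and> y < b"
proof -
  have "y \<in> ival (c y)" using interval_partition_onD(1)[OF assms(1)] by simp
  then show ?thesis
    using assms(2,3)[unfolded cut_on_def, rule_format, of y] assms(4) by (auto simp: ival_def)
qed

definition join_cells :: "int \<Rightarrow> cell_map \<Rightarrow> cell_map \<Rightarrow> cell_map" where
  "join_cells b c d y = (if y < b then c y else d y)"

lemma join_cells_partition:
  assumes c: "interval_partition_on {a..<b} c" and d: "interval_partition_on {b..<e} d"
    and "a \<le> b" "b \<le> e"
  shows "interval_partition_on {a..<e} (join_cells b c d)"
  unfolding interval_partition_on_def
proof
  fix y assume y: "y \<in> {a..<e}"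
  show "y \<in> ival (join_cells b c d y) \<and> ival (join_cells b c d y) \<subseteq> {a..<e} \<and>
        (\<forall>z\<in>ival (join_cells b c d y). join_cells b c d z = join_cells b c d y)"
  proof (cases "y < b")
    case True
    then have "y \<in> {a..<b}" using y by simp
    note cy = interval_partition_onD[OF c this]
    have "join_cells b c d z = c y" if "z \<in> ival (c y)" for z
      using cy(2,3) that by (auto simp: join_cells_def)
    then show ?thesis using True cy(1,2) \<open>b \<le> e\<close> by (auto simp: join_cells_def)
  next
    case False
    then have "y \<in> {b..<e}" using y by simp
    note dy = interval_partition_onD[OF d this]
    have "join_cells b c d z = d y" if "z \<in> ival (d y)" for z
      using dy(2,3) that by (auto simp: join_cells_def)
    then show ?thesis using False dy(1,2) \<open>a \<le> b\<close> by (auto simp: join_cells_def)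
  qed
qed

lemma join_cells_cut:
  assumes c: "interval_partition_on {a..<b} c" and "cut_on {b..<e} d x" "b \<le> x"
  shows "cut_on {a..<e} (join_cells b c d) x"
  unfolding cut_on_def
proof
  fix y assume y: "y \<in> {a..<e}"
  show "x \<le> fst (join_cells b c d y) \<or> fst (join_cells b c d y) + snd (join_cells b c d y) \<le> x"
  proof (cases "y < b")
    case True
    then have "fst (c y) + snd (c y) \<le> b"
      using interval_partition_on_bounds[OF c] y by simp
    then show ?thesis using True \<open>b \<le> x\<close> by (simp add: join_cells_def)
  next
    case False
    then show ?thesis using assms(2) y by (simp add: join_cells_def cut_on_def)
  qed
qed

definition periodic_cells :: "int \<Rightarrow> int \<Rightarrow> cell_map \<Rightarrow> cell_map" where
  "periodic_cells P off c y =
     (off + P * ((y - off) div P) + fst (c ((y - off) mod P)), snd (c ((y - off) mod P)))"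

lemma snd_periodic_cells [simp]:
  "snd (periodic_cells P off c y) = snd (c ((y - off) mod P))"
  by (simp add: periodic_cells_def)

lemma periodic_cells_partition:
  assumes P: "0 < P" and c: "interval_partition_on {0..<P} c"
  shows "interval_partition_on UNIV (periodic_cells P off c)"
  unfolding interval_partition_on_def
proof
  fix y :: int
  define q where "q = (y - off) div P"
  define r where "r = (y - off) mod P"
  have "r \<in> {0..<P}" using P by (simp add: r_def)
  note cr = interval_partition_onD[OF c this]
  have y_eq: "y = off + P * q + r"
    using mult_div_mod_eq[of P "y - off"] unfolding q_def r_def by linarith
  have cell: "periodic_cells P off c y = (off + P * q + fst (c r), snd (c r))"
    by (simp add: periodic_cells_def q_def r_def)
  have "y \<in> ival (periodic_cells P off c y)"
    using cr(1) y_eq cell by (auto simp: ival_def)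
  moreover have "periodic_cells P off c z = periodic_cells P off c y"
    if z: "z \<in> ival (periodic_cells P off c y)" for z
  proof -
    define r' where "r' = z - off - P * q"
    have "r' \<in> ival (c r)" using z cell by (auto simp: ival_def r'_def)
    then have "r' \<in> {0..<P}" "c r' = c r" using cr(2,3) by auto
    moreover have "z - off = P * q + r'" by (simp add: r'_def)
    ultimately have "(z - off) div P = q" "(z - off) mod P = r'"
      using int_div_pos_eq[of "z - off" P q r'] int_mod_pos_eq[of "z - off" P q r'] by auto
    then show ?thesis using \<open>c r' = c r\<close> cell by (simp add: periodic_cells_def)
  qed
  ultimately show "y \<in> ival (periodic_cells P off c y) \<and> ival (periodic_cells P off c y) \<subseteq> UNIV \<and>
        (\<forall>z\<in>ival (periodic_cells P off c y). periodic_cells P off c z = periodic_cells P off c y)"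
    by blast
qed

lemma periodic_cells_cut:
  assumes P: "0 < P" and c: "interval_partition_on {0..<P} c"
    and b: "0 \<le> b" "b \<le> P" "cut_on {0..<P} c b" and x: "P dvd x - off - b"
  shows "cut_on UNIV (periodic_cells P off c) x"
  unfolding cut_on_def
proof
  fix y :: int
  obtain m where "x - off - b = P * m" using x by (elim dvdE)
  then have x_eq: "x = off + P * m + b" by simp
  define q where "q = (y - off) div P"
  define r where "r = (y - off) mod P"
  have "r \<in> {0..<P}" using P by (simp add: r_def)
  then have within: "0 \<le> fst (c r)" "fst (c r) + snd (c r) \<le> P"
    using interval_partition_on_bounds[OF c] by auto
  have cell: "periodic_cells P off c y = (off + P * q + fst (c r), snd (c r))"
    by (simp add: periodic_cells_def q_def r_def)
  consider "q < m" | "q = m" | "m < q" by linarith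
  then show "x \<le> fst (periodic_cells P off c y) \<or>
             fst (periodic_cells P off c y) + snd (periodic_cells P off c y) \<le> x"
  proof cases
    case 1
    then have "P * (q + 1) \<le> P * m" using P by (intro mult_left_mono) auto
    then show ?thesis using cell within b x_eq by (simp add: algebra_simps)
  next
    case 2
    then show ?thesis using cell b(3) \<open>r \<in> {0..<P}\<close> x_eq by (auto simp: cut_on_def)
  next
    case 3
    then have "P * (m + 1) \<le> P * q" using P by (intro mult_left_mono) auto
    then show ?thesis using cell within b x_eq by (simp add: algebra_simps)
  qed
qed

definition grid_cells :: "int \<Rightarrow> int \<Rightarrow> cell_map" where
  "grid_cells k off = periodic_cells k off (\<lambda>_. (0, k))"

lemma snd_grid_cells [simp]: "snd (grid_cells k off y) = k"
  by (simp add: grid_cells_def)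

lemma grid_cells_partition:
  assumes "0 < k"
  shows "interval_partition_on UNIV (grid_cells k off)"
  unfolding grid_cells_def
  using assms by (intro periodic_cells_partition) (auto simp: interval_partition_on_def ival_def)

lemma grid_cells_cut:
  assumes "0 < k" "k dvd x - off"
  shows "cut_on UNIV (grid_cells k off) x"
  using periodic_cells_cut[OF assms(1), of "\<lambda>_. (0, k)" 0 x off] assms
  by (simp add: grid_cells_def interval_partition_on_def cut_on_def ival_def)

definition fill_cells :: "int \<Rightarrow> int \<Rightarrow> int \<Rightarrow> cell_map" where
  "fill_cells k lo hi =
     (let e = lo + k * ((hi - lo) div k - 1) in join_cells e (grid_cells k lo) (\<lambda>_. (e, hi - e)))"

lemma fill_cells_partition:
  assumes k: "0 < k" and len: "lo + k \<le> hi"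
  shows "interval_partition_on {lo..<hi} (fill_cells k lo hi)"
proof -
  define e where "e = lo + k * ((hi - lo) div k - 1)"
  have "k * ((hi - lo) div k) \<le> hi - lo"
    using mult_div_mod_eq[of k "hi - lo"] pos_mod_sign[OF k, of "hi - lo"] by linarith
  then have "e \<le> hi" using k by (simp add: e_def algebra_simps)
  have "k div k \<le> (hi - lo) div k" using k len by (intro zdiv_mono1) auto
  then have "lo \<le> e" using k by (simp add: e_def)
  have "interval_partition_on {lo..<e} (grid_cells k lo)"
    using grid_cells_partition grid_cells_cut k
    by (intro interval_partition_on_restrict) (simp_all add: e_def)
  moreover have "interval_partition_on {e..<hi} (\<lambda>_. (e, hi - e))"
    by (auto simp: interval_partition_on_def ival_def)
  ultimately show ?thesis
    unfolding fill_cells_def Let_def e_def[symmetric]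
    using \<open>lo \<le> e\<close> \<open>e \<le> hi\<close> by (rule join_cells_partition)
qed

lemma fill_cells_length:
  assumes k: "0 < k"
  shows "k \<le> snd (fill_cells k lo hi y) \<and> snd (fill_cells k lo hi y) \<le> 2 * k"
proof -
  have "hi - (lo + k * ((hi - lo) div k - 1)) = (hi - lo) mod k + k"
    using minus_mult_div_eq_mod[of "hi - lo" k] by (simp add: algebra_simps)
  then show ?thesis
    using k pos_mod_bound[OF k, of "hi - lo"] pos_mod_sign[OF k, of "hi - lo"]
    by (simp add: fill_cells_def Let_def join_cells_def)
qed

text \<open>
  In a period starting at g - 3k, the cut points 0, 3k - g and 6k lie at \<beta> + g - 3k, \<beta> and
  \<beta> + g + (N + 3)k (mod Nk), the endpoints of the B- and A-intervals for \<beta> \<in> Nk\<int>.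
\<close>

definition mid_pattern :: "int \<Rightarrow> int \<Rightarrow> int \<Rightarrow> cell_map" where
  "mid_pattern N k g =
     join_cells (3 * k - g) (fill_cells k 0 (3 * k - g))
       (join_cells (6 * k) (fill_cells k (3 * k - g) (6 * k)) (fill_cells k (6 * k) (N * k)))"

definition mid_cells :: "int \<Rightarrow> int \<Rightarrow> int \<Rightarrow> cell_map" where
  "mid_cells N k g = periodic_cells (N * k) (g - 3 * k) (mid_pattern N k g)"

context
  fixes N k g :: int
  assumes k: "0 < k" and g: "0 \<le> g" "g < k" and N: "7 \<le> N"
begin

private lemma Nk_bounds: "7 * k \<le> N * k" "0 < N * k"
  using N k by (simp_all add: mult_right_mono)

private lemma fill_parts:
  "interval_partition_on {0..<3 * k - g} (fill_cells k 0 (3 * k - g))"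
  "interval_partition_on {3 * k - g..<6 * k} (fill_cells k (3 * k - g) (6 * k))"
  "interval_partition_on {6 * k..<N * k} (fill_cells k (6 * k) (N * k))"
  using k g Nk_bounds by (auto intro: fill_cells_partition)

private lemma tail_partition:
  "interval_partition_on {3 * k - g..<N * k}
     (join_cells (6 * k) (fill_cells k (3 * k - g) (6 * k)) (fill_cells k (6 * k) (N * k)))"
  using fill_parts(2,3) g Nk_bounds by (intro join_cells_partition) auto

lemma mid_pattern_partition: "interval_partition_on {0..<N * k} (mid_pattern N k g)"
  unfolding mid_pattern_def
  using g k Nk_bounds(1) by (intro join_cells_partition[OF fill_parts(1) tail_partition]) linarith+

lemma mid_pattern_cut:
  assumes "x \<in> {0, 3 * k - g, 6 * k}"
  shows "cut_on {0..<N * k} (mid_pattern N k g) x"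
proof -
  have "cut_on {3 * k - g..<N * k}
      (join_cells (6 * k) (fill_cells k (3 * k - g) (6 * k)) (fill_cells k (6 * k) (N * k))) (6 * k)"
    using join_cells_cut[OF fill_parts(2) cut_on_lower[OF fill_parts(3)]] by simp
  then show ?thesis
    using assms cut_on_lower[OF mid_pattern_partition] g
      join_cells_cut[OF fill_parts(1) cut_on_lower[OF tail_partition]]
      join_cells_cut[OF fill_parts(1)]
    by (auto simp: mid_pattern_def)
qed

lemma mid_cells_partition: "interval_partition_on UNIV (mid_cells N k g)"
  unfolding mid_cells_def using Nk_bounds(2) mid_pattern_partition by (rule periodic_cells_partition)

lemma mid_cells_cut:
  assumes b: "b \<in> {0, 3 * k - g, 6 * k}" and x: "N * k dvd x - (g - 3 * k) - b"
  shows "cut_on UNIV (mid_cells N k g) x"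
proof -
  from b have "b = 0 \<or> b = 3 * k - g \<or> b = 6 * k" by simp
  then have "0 \<le> b \<and> b \<le> N * k" using g k Nk_bounds(1) by (elim disjE; linarith)
  then show ?thesis
    unfolding mid_cells_def
    using periodic_cells_cut[OF Nk_bounds(2) mid_pattern_partition _ _ mid_pattern_cut[OF b] x] by simp
qed

lemma mid_cells_length: "k \<le> snd (mid_cells N k g y) \<and> snd (mid_cells N k g y) \<le> 2 * k"
  using fill_cells_length[OF k] by (simp add: mid_cells_def mid_pattern_def join_cells_def)

end

section \<open>Product cells and tilings\<close>

definition cell_box :: "('d \<Rightarrow> cell_map) \<Rightarrow> int ^ 'd \<Rightarrow> (int ^ 'd) set" where
  "cell_box c x = box_at (\<chi> j. fst (c j (x $ j))) (\<chi> j. snd (c j (x $ j)))"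

lemma mem_cell_box_iff: "z \<in> cell_box c x \<longleftrightarrow> (\<forall>j. z $ j \<in> ival (c j (x $ j)))"
  by (simp add: cell_box_def box_at_def ival_def)

lemma cell_box_self:
  assumes "\<And>j. interval_partition_on UNIV (c j)"
  shows "x \<in> cell_box c x"
  using interval_partition_onD(1)[OF assms] by (simp add: mem_cell_box_iff)

lemma cell_box_eq:
  assumes "\<And>j. interval_partition_on UNIV (c j)" "z \<in> cell_box c x"
  shows "cell_box c z = cell_box c x"
proof -
  have "c j (z $ j) = c j (x $ j)" for j
    using interval_partition_onD(3)[OF assms(1)] assms(2) by (simp add: mem_cell_box_iff)
  then show ?thesis by (simp add: cell_box_def)
qed

lemma cell_box_almost_k_box:
  assumes "\<And>j y. k \<le> snd (c j y) \<and> snd (c j y) \<le> 2 * k"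
    and "\<And>j y. j \<noteq> j0 \<Longrightarrow> snd (c j y) = k"
  shows "almost_k_box k (cell_box c x)"
proof -
  let ?s = "\<chi> j. snd (c j (x $ j))"
  have "{j. ?s $ j \<noteq> k} \<subseteq> {j0}" using assms(2) by auto
  then have "card {j. ?s $ j \<noteq> k} \<le> 1" using card_mono[of "{j0}"] by fastforce
  then have "almost_k_shape k ?s" using assms(1) by (simp add: almost_k_shape_def)
  then show ?thesis unfolding almost_k_box_def cell_box_def by blast
qed

lemma cell_box_mem_box_union_iff:
  assumes c: "\<And>j. interval_partition_on UNIV (c j)"
    and lo: "\<And>\<beta> j. \<beta> \<in> L \<Longrightarrow> cut_on UNIV (c j) (lo \<beta> j)"
    and hi: "\<And>\<beta> j. \<beta> \<in> L \<Longrightarrow> cut_on UNIV (c j) (hi \<beta> j)"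
    and z: "z \<in> cell_box c x"
  shows "z \<in> (\<Union>\<beta>\<in>L. {y. \<forall>j. lo \<beta> j \<le> y $ j \<and> y $ j < hi \<beta> j}) \<longleftrightarrow>
         x \<in> (\<Union>\<beta>\<in>L. {y. \<forall>j. lo \<beta> j \<le> y $ j \<and> y $ j < hi \<beta> j})"
proof -
  have "lo \<beta> j \<le> z $ j \<and> z $ j < hi \<beta> j \<longleftrightarrow> lo \<beta> j \<le> x $ j \<and> x $ j < hi \<beta> j"
    if "\<beta> \<in> L" for \<beta> j
    using cut_on_mem_iff[OF c lo[OF that] hi[OF that]] z by (simp add: mem_cell_box_iff)
  then show ?thesis by blast
qed

lemma tiled_by_almost_k_boxesI:
  assumes self: "\<And>x. x \<in> S \<Longrightarrow> x \<in> Q x"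
    and sub: "\<And>x. x \<in> S \<Longrightarrow> Q x \<subseteq> S"
    and eq: "\<And>x z. x \<in> S \<Longrightarrow> z \<in> Q x \<Longrightarrow> Q z = Q x"
    and box: "\<And>x. x \<in> S \<Longrightarrow> almost_k_box k (Q x)"
  shows "tiled_by_almost_k_boxes k S"
  unfolding tiled_by_almost_k_boxes_def
proof (intro exI conjI)
  show "\<forall>P\<in>Q ` S. almost_k_box k P" using box by blast
  show "pairwise disjnt (Q ` S)"
  proof (rule pairwiseI, clarsimp)
    fix x y assume x: "x \<in> S" and y: "y \<in> S" and "Q x \<noteq> Q y"
    have "z \<notin> Q y" if "z \<in> Q x" for z
    proof
      assume "z \<in> Q y"
      then have "Q z = Q y" using eq[OF y] by blast
      moreover have "Q z = Q x" using eq[OF x] that by blast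
      ultimately show False using \<open>Q x \<noteq> Q y\<close> by simp
    qed
    then show "disjnt (Q x) (Q y)" by (auto simp: disjnt_def)
  qed
  show "\<Union> (Q ` S) = S" using self sub by blast
qed

lemma tiled_by_almost_k_boxes_UN:
  assumes "disjoint_family_on S I" "\<And>i. i \<in> I \<Longrightarrow> tiled_by_almost_k_boxes k (S i)"
  shows "tiled_by_almost_k_boxes k (\<Union>i\<in>I. S i)"
proof -
  obtain T where T: "\<And>i. i \<in> I \<Longrightarrow> (\<forall>P\<in>T i. almost_k_box k P) \<and> disjoint (T i) \<and> \<Union> (T i) = S i"
    using assms(2) unfolding tiled_by_almost_k_boxes_def by metis
  have "\<forall>P\<in>\<Union> (T ` I). almost_k_box k P" using T by blast
  moreover have "disjoint_family_on (\<lambda>i. \<Union> (T i)) I"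
    using assms(1) T by (simp add: disjoint_family_on_def)
  then have "disjoint (\<Union> (T ` I))" using T by (intro disjoint_UN) auto
  moreover have "\<Union> (\<Union> (T ` I)) = (\<Union>i\<in>I. S i)"
  proof -
    have "\<Union> (\<Union> (T ` I)) = (\<Union>i\<in>I. \<Union> (T i))" by blast
    also have "\<dots> = (\<Union>i\<in>I. S i)" by (rule SUP_cong) (use T in auto)
    finally show ?thesis .
  qed
  ultimately show ?thesis
    unfolding tiled_by_almost_k_boxes_def by (intro exI[of _ "\<Union> (T ` I)"] conjI)
qed

lemma decseq_Diff_eq_UN:
  fixes H :: "nat \<Rightarrow> 'a set"
  assumes "decseq H"
  shows "H 0 - H n = (\<Union>u<n. H u - H (Suc u))"
proof (induction n)
  case (Suc n)
  have "H (Suc n) \<subseteq> H n" "H n \<subseteq> H 0" using decseqD[OF assms] by auto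
  then have "H 0 - H (Suc n) = (H 0 - H n) \<union> (H n - H (Suc n))" by blast
  then show ?case using Suc.IH by (simp add: lessThan_Suc Un_commute)
qed simp

lemma disjoint_family_decseq_Diff:
  fixes H :: "nat \<Rightarrow> 'a set"
  assumes "decseq H"
  shows "disjoint_family (\<lambda>u. H u - H (Suc u))"
  using disjoint_family_Suc[of "\<lambda>u. - H u"] decseqD[OF assms] by (simp add: Diff_eq Int_commute)

section \<open>The layers between A and B\<close>

locale box_layers =
  fixes N k :: int and L :: "(int ^ 'd) set" and \<gamma> :: "int ^ 'd" and f :: "'d \<Rightarrow> nat"
  assumes N: "7 \<le> N" and k: "0 < k"
    and L: "\<forall>\<beta>\<in>L. \<forall>i. N * k dvd \<beta> $ i"
    and \<gamma>: "\<forall>i. 0 \<le> \<gamma> $ i \<and> \<gamma> $ i < k"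
    and inj_f: "inj f"
begin

definition layer_lo :: "nat \<Rightarrow> int ^ 'd \<Rightarrow> 'd \<Rightarrow> int" where
  "layer_lo t \<beta> j = (if f j < t then \<beta> $ j else \<beta> $ j + \<gamma> $ j - 3 * k)"

definition layer_hi :: "nat \<Rightarrow> int ^ 'd \<Rightarrow> 'd \<Rightarrow> int" where
  "layer_hi t \<beta> j = (if f j < t then \<beta> $ j + N * k else \<beta> $ j + \<gamma> $ j + (N + 3) * k)"

definition layer :: "nat \<Rightarrow> (int ^ 'd) set" where
  "layer t = (\<Union>\<beta>\<in>L. {x. \<forall>j. layer_lo t \<beta> j \<le> x $ j \<and> x $ j < layer_hi t \<beta> j})"

definition layer_cells :: "nat \<Rightarrow> 'd \<Rightarrow> cell_map" where
  "layer_cells u j =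
     (if f j < u then grid_cells k 0 else if f j = u then mid_cells N k (\<gamma> $ j) else grid_cells k (\<gamma> $ j))"

lemma layer_0:
  "layer 0 = (\<Union>\<beta>\<in>L. {x. \<forall>i. \<beta> $ i + \<gamma> $ i - 3 * k \<le> x $ i \<and> x $ i < \<beta> $ i + \<gamma> $ i + (N + 3) * k})"
  by (simp add: layer_def layer_lo_def layer_hi_def)

lemma layer_top:
  assumes "\<And>j. f j < n"
  shows "layer n = (\<Union>\<beta>\<in>L. {x. \<forall>i. \<beta> $ i \<le> x $ i \<and> x $ i < \<beta> $ i + N * k})"
  using assms by (simp add: layer_def layer_lo_def layer_hi_def)

lemma decseq_layer: "decseq layer"
proof (rule decseq_SucI)
  fix t
  have lo: "layer_lo t \<beta> j \<le> layer_lo (Suc t) \<beta> j"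
    and hi: "layer_hi (Suc t) \<beta> j \<le> layer_hi t \<beta> j" for \<beta> j
    using \<gamma>[rule_format, of j] k by (auto simp: layer_lo_def layer_hi_def algebra_simps)
  show "layer (Suc t) \<subseteq> layer t"
  proof
    fix x assume "x \<in> layer (Suc t)"
    then obtain \<beta> where "\<beta> \<in> L" and x: "\<forall>j. layer_lo (Suc t) \<beta> j \<le> x $ j \<and> x $ j < layer_hi (Suc t) \<beta> j"
      unfolding layer_def by blast
    have "layer_lo t \<beta> j \<le> x $ j \<and> x $ j < layer_hi t \<beta> j" for j
      using lo[of \<beta> j] hi[of \<beta> j] x by (meson order_trans less_le_trans)
    then show "x \<in> layer t" using \<open>\<beta> \<in> L\<close> unfolding layer_def by blast
  qed
qed

lemma layer_cells_partition: "interval_partition_on UNIV (layer_cells u j)"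
  using grid_cells_partition mid_cells_partition k \<gamma> N by (simp add: layer_cells_def)

lemma layer_cells_length:
  "k \<le> snd (layer_cells u j y) \<and> snd (layer_cells u j y) \<le> 2 * k"
  "j \<noteq> inv f u \<Longrightarrow> snd (layer_cells u j y) = k"
proof -
  show "k \<le> snd (layer_cells u j y) \<and> snd (layer_cells u j y) \<le> 2 * k"
    using mid_cells_length[of k "\<gamma> $ j" N] k \<gamma> N by (simp add: layer_cells_def)
  assume "j \<noteq> inv f u"
  then have "f j \<noteq> u" using inv_f_f[OF inj_f, of j] by auto
  then show "snd (layer_cells u j y) = k" by (simp add: layer_cells_def)
qed

lemma layer_cells_cut:
  assumes "\<beta> \<in> L" "t = u \<or> t = Suc u"
  shows "cut_on UNIV (layer_cells u j) (layer_lo t \<beta> j) \<and> cut_on UNIV (layer_cells u j) (layer_hi t \<beta> j)"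
proof -
  obtain c where c: "\<beta> $ j = N * k * c" using L assms(1) by (meson dvdE)
  have g: "0 \<le> \<gamma> $ j" "\<gamma> $ j < k" using \<gamma> by auto
  consider "f j < u" | "f j = u" | "u < f j" by linarith
  then show ?thesis
  proof cases
    case 1
    then have "f j < t" using assms(2) by auto
    then show ?thesis using 1
      by (auto simp: layer_cells_def layer_lo_def layer_hi_def c algebra_simps intro!: grid_cells_cut k)
  next
    case 2
    note cut = mid_cells_cut[OF k g N]
    show ?thesis using assms(2)
    proof
      assume "t = u"
      then show ?thesis using 2 cut[of 0] cut[of "6 * k"]
        by (auto simp: layer_cells_def layer_lo_def layer_hi_def c algebra_simps)
    next
      assume "t = Suc u"
      then show ?thesis using 2 cut[of "3 * k - \<gamma> $ j"]
        by (auto simp: layer_cells_def layer_lo_def layer_hi_def c algebra_simps)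
    qed
  next
    case 3
    then have "\<not> f j < t" using assms(2) by auto
    then show ?thesis using 3
      by (auto simp: layer_cells_def layer_lo_def layer_hi_def c algebra_simps intro!: grid_cells_cut k)
  qed
qed

lemma tiled_layer_Diff: "tiled_by_almost_k_boxes k (layer u - layer (Suc u))"
proof -
  let ?Q = "cell_box (layer_cells u)"
  have layer_iff: "z \<in> layer t \<longleftrightarrow> x \<in> layer t"
    if "z \<in> ?Q x" "t = u \<or> t = Suc u" for x z t
    unfolding layer_def
    using layer_cells_partition layer_cells_cut that by (intro cell_box_mem_box_union_iff) auto
  show ?thesis
  proof (rule tiled_by_almost_k_boxesI)
    show "x \<in> ?Q x" for x by (rule cell_box_self[OF layer_cells_partition])
    show "?Q x \<subseteq> layer u - layer (Suc u)" if "x \<in> layer u - layer (Suc u)" for x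
      using layer_iff that by blast
    show "?Q z = ?Q x" if "z \<in> ?Q x" for x z
      by (rule cell_box_eq[OF layer_cells_partition that])
    show "almost_k_box k (?Q x)" for x
      using layer_cells_length by (intro cell_box_almost_k_box)
  qed
qed

end

theorem lemma6p1:
  fixes N k :: int and L :: "(int ^ 'd) set" and \<gamma> :: "int ^ 'd"
  assumes "N \<ge> 10" and "k \<ge> 10"
    and "\<forall>\<beta>\<in>L. \<forall>i. (N * k) dvd \<beta> $ i"
    and "\<forall>i. 0 \<le> \<gamma> $ i \<and> \<gamma> $ i < k"
  defines "A \<equiv> (\<Union>\<beta>\<in>L. {x. \<forall>i. \<beta> $ i \<le> x $ i \<and> x $ i < \<beta> $ i + N * k})"
    and "B \<equiv> (\<Union>\<beta>\<in>L. {x. \<forall>i. \<beta> $ i + \<gamma> $ i - 3 * k \<le> x $ i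
                                  \<and> x $ i < \<beta> $ i + \<gamma> $ i + (N + 3) * k})"
  shows "tiled_by_almost_k_boxes k (B - A)"
proof -
  obtain f :: "'d \<Rightarrow> nat" where f_bij: "bij_betw f UNIV {0..<CARD('d)}"
    using ex_bij_betw_finite_nat[of "UNIV :: 'd set"] by auto
  interpret box_layers N k L \<gamma> f
    using assms(1-4) f_bij by unfold_locales (auto simp: bij_betw_def)
  have "f j < CARD('d)" for j using bij_betwE[OF f_bij] by simp
  then have "B - A = layer 0 - layer CARD('d)" by (simp add: layer_0 layer_top A_def B_def)
  also have "\<dots> = (\<Union>u<CARD('d). layer u - layer (Suc u))"
    by (rule decseq_Diff_eq_UN[OF decseq_layer])
  finally have "B - A = (\<Union>u<CARD('d). layer u - layer (Suc u))" .
  moreover have "tiled_by_almost_k_boxes k (\<Union>u<CARD('d). layer u - layer (Suc u))"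
    using disjoint_family_on_mono[OF subset_UNIV disjoint_family_decseq_Diff[OF decseq_layer]]
    by (intro tiled_by_almost_k_boxes_UN tiled_layer_Diff)
  ultimately show ?thesis by simp
qed

end
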